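(* Let $\Gamma$ be finite. For every directed edge $\epsilon\in\vec E$, as operators on $\mathcal H$, $$[\ell(\epsilon),JX_\epsilon J]=-\frac{1}{\sqrt[4]{\mu(s(\epsilon))^3\mu(t(\epsilon))}}\,|s(\epsilon)\rangle\langle t(\epsilon)|,$$ and $[\ell(\epsilon),JX_{\epsilon'}J]=0$ whenever $\epsilon'\in\vec E$, $\epsilon'\neq\epsilon$.
   Context: $\Gamma$ is a finite connected undirected graph (loops, multiple edges allowed), vertex set $V$, weighting $\mu:V\to(0,\infty)$. Directed version $\vec\Gamma$: each edge with distinct endpoints $\alpha\ne\beta$ yields $\epsilon,\epsilon^{op}$ with $s(\epsilon)=t(\epsilon^{op})=\alpha$, $t(\epsilon)=s(\epsilon^{op})=\beta$; each loop yields one directed loop $\epsilon=\epsilon^{op}$. $\mathcal C=C_0(V)$, $p_\alpha$ indicator of $\alpha$; $\mathcal X$ the Hilbert $\mathcal C$-$\mathcal C$ bimodule spanned by directed edges with $p_\alpha\epsilon=\delta_{s(\epsilon),\alpha}\epsilon$, $\epsilon p_\alpha=\delta_{t(\epsilon),\alpha}\epsilon$, $\langle\epsilon'|\epsilon\rangle=\delta_{\epsilon,\epsilon'}p_{t(\epsilon)}$; $\mathcal F(\mathcal X)$ its full Fock space with creation operators $\ell(\xi)$. For a loop $e$: $X_e=\ell(\epsilon)+\ell(\epsilon)^*$; for $e$ with endpoints $\alpha\ne\beta$: $a_\epsilon=(\mu(\alpha)/\mu(\beta))^{1/4}$, $X_e=a_\epsilon\ell(\epsilon)+a_\epsilon^{-1}\ell(\epsilon^{op})^*+a_\epsilon^{-1}\ell(\epsilon^{op})+a_\epsilon\ell(\epsilon)^*$;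 $X_\epsilon=p_{s(\epsilon)}X_ep_{t(\epsilon)}$. $\mathcal S(\Gamma,\mu)$ is the C$^*$-algebra generated by $\mathcal C$ and the $X_e$; $\mathrm{Tr}=\mathrm{tr}\circ E$ with $E(x)=PxP$, $\mathrm{tr}(p_v)=\mu(v)$. $\mathcal H=L^2(\mathcal S(\Gamma,\mu),\mathrm{Tr})\cong\mathcal F(\mathcal X)\otimes_{\mathcal C}\ell^2(V,\mu)$, with inner product linear in the right variable. $\mathcal H$ has an orthogonal spanning set consisting of the vertices $\gamma\in V$ (the vectors $\widehat{p_\gamma}$, paths of length 0) and the paths $\epsilon_1\cdots\epsilon_n$ in $\vec\Gamma$ ($t(\epsilon_k)=s(\epsilon_{k+1})$), with $\|\gamma\|=\sqrt{\mu(\gamma)}$, $\|\epsilon_1\cdots\epsilon_n\|=\sqrt{\mu(t(\epsilon_n))}$. The operator $\ell(\epsilon)$ acts by $\ell(\epsilon)\gamma=\delta_{t(\epsilon),\gamma}\epsilon$ and $\ell(\epsilon)(\epsilon_1\cdots\epsilon_n)=\epsilon\epsilon_1\cdots\epsilon_n$ if $t(\epsilon)=s(\epsilon_1)$ and $0$ otherwise; $\mathcal S(\Gamma,\mu)$ acts on $\mathcal H$ by left multiplication. $J$ is the modular conjugation, the antilinear isometry extending $\hat x\mapsto\widehat{x^*}$; concretely $J\gamma=\gamma$ and $J(\epsilon_1\cdots\epsilon_n)=\sqrt{\mu(t(\epsilon_n))/\mu(s(\epsilon_1))}\,\epsilon_n^{op}\cdots\epsilon_1^{op}$. For $\xi,\eta\in\mathcal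 H$, $|\xi\rangle\langle\eta|$ is the rank-one operator $\zeta\mapsto\xi\langle\eta|\zeta\rangle_{\mathcal H}$; vertices $s(\epsilon),t(\epsilon)$ are regarded as vectors in $\mathcal H$. *)

theory Defs
  imports Complex_Main
begin

text \<open>
  Concrete model of the Hilbert space H = L^2(S(Gamma,mu),Tr) via its orthogonal spanning set:
  vertices (V gamma) and paths (P [e1,...,en]) in the directed graph.
  Vectors are finitely supported coefficient functions with respect to this orthogonal
  spanning set (this is the dense span; all operators involved are bounded).
\<close>

datatype ('v,'e) hb = V 'v | P "'e list"

definition is_dpath :: "('e \<Rightarrow> 'v) \<Rightarrow> ('e \<Rightarrow> 'v) \<Rightarrow> 'e list \<Rightarrow> bool" where
  "is_dpath s t es \<longleftrightarrow> es \<noteq> [] \<and> (\<forall>k. Suc k < length es \<longrightarrow> t (es ! k) = s (es ! Suc k))"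

fun hb_ok :: "('e \<Rightarrow> 'v) \<Rightarrow> ('e \<Rightarrow> 'v) \<Rightarrow> ('v,'e) hb \<Rightarrow> bool" where
  "hb_ok s t (V v) = True"
| "hb_ok s t (P es) = is_dpath s t es"

type_synonym ('v,'e) vec = "('v,'e) hb \<Rightarrow> complex"
type_synonym ('v,'e) op = "('v,'e) vec \<Rightarrow> ('v,'e) vec"

definition in_H :: "('e \<Rightarrow> 'v) \<Rightarrow> ('e \<Rightarrow> 'v) \<Rightarrow> ('v,'e) vec \<Rightarrow> bool" where
  "in_H s t x \<longleftrightarrow> finite {b. x b \<noteq> 0} \<and> (\<forall>b. x b \<noteq> 0 \<longrightarrow> hb_ok s t b)"

text \<open>Squared norms of the spanning vectors.\<close>
fun wt :: "('v \<Rightarrow> real) \<Rightarrow> ('e \<Rightarrow> 'v) \<Rightarrow> ('v,'e) hb \<Rightarrow> real" where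
  "wt mu t (V v) = mu v"
| "wt mu t (P es) = mu (t (last es))"

definition hinner :: "('v \<Rightarrow> real) \<Rightarrow> ('e \<Rightarrow> 'v) \<Rightarrow> ('v,'e) vec \<Rightarrow> ('v,'e) vec \<Rightarrow> complex" where
  "hinner mu t x y = (\<Sum>b\<in>{b. x b \<noteq> 0}. cnj (x b) * y b * complex_of_real (wt mu t b))"

definition bv :: "('v,'e) hb \<Rightarrow> ('v,'e) vec" where
  "bv b = (\<lambda>c. if c = b then 1 else 0)"

definition lin_ext :: "(('v,'e) hb \<Rightarrow> ('v,'e) vec) \<Rightarrow> ('v,'e) op" where
  "lin_ext f x = (\<lambda>c. \<Sum>b\<in>{b. x b \<noteq> 0}. x b * f b c)"

definition alin_ext :: "(('v,'e) hb \<Rightarrow> ('v,'e) vec) \<Rightarrow> ('v,'e) op" where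
  "alin_ext f x = (\<lambda>c. \<Sum>b\<in>{b. x b \<noteq> 0}. cnj (x b) * f b c)"

fun ell_b :: "('e \<Rightarrow> 'v) \<Rightarrow> ('e \<Rightarrow> 'v) \<Rightarrow> 'e \<Rightarrow> ('v,'e) hb \<Rightarrow> ('v,'e) vec" where
  "ell_b s t e (V g) = (if t e = g then bv (P [e]) else (\<lambda>_. 0))"
| "ell_b s t e (P es) = (if es \<noteq> [] \<and> t e = s (hd es) then bv (P (e # es)) else (\<lambda>_. 0))"

definition ell :: "('e \<Rightarrow> 'v) \<Rightarrow> ('e \<Rightarrow> 'v) \<Rightarrow> 'e \<Rightarrow> ('v,'e) op" where
  "ell s t e = lin_ext (ell_b s t e)"

fun ellstar_b :: "('e \<Rightarrow> 'v) \<Rightarrow> 'e \<Rightarrow> ('v,'e) hb \<Rightarrow> ('v,'e) vec" where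
  "ellstar_b t e (V g) = (\<lambda>_. 0)"
| "ellstar_b t e (P es) = (if es \<noteq> [] \<and> hd es = e then
      (if tl es = [] then bv (V (t e)) else bv (P (tl es))) else (\<lambda>_. 0))"

definition ellstar :: "('e \<Rightarrow> 'v) \<Rightarrow> 'e \<Rightarrow> ('v,'e) op" where
  "ellstar t e = lin_ext (ellstar_b t e)"

fun proj_b :: "('e \<Rightarrow> 'v) \<Rightarrow> 'v \<Rightarrow> ('v,'e) hb \<Rightarrow> ('v,'e) vec" where
  "proj_b s a (V g) = (if g = a then bv (V g) else (\<lambda>_. 0))"
| "proj_b s a (P es) = (if es \<noteq> [] \<and> s (hd es) = a then bv (P es) else (\<lambda>_. 0))"

definition proj :: "('e \<Rightarrow> 'v) \<Rightarrow> 'v \<Rightarrow> ('v,'e) op" where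
  "proj s a = lin_ext (proj_b s a)"

fun J_b :: "('v \<Rightarrow> real) \<Rightarrow> ('e \<Rightarrow> 'v) \<Rightarrow> ('e \<Rightarrow> 'v) \<Rightarrow> ('e \<Rightarrow> 'e) \<Rightarrow> ('v,'e) hb \<Rightarrow> ('v,'e) vec" where
  "J_b mu s t opp (V g) = bv (V g)"
| "J_b mu s t opp (P es) =
     (\<lambda>c. complex_of_real (sqrt (mu (t (last es)) / mu (s (hd es)))) * bv (P (rev (map opp es))) c)"

definition Jop :: "('v \<Rightarrow> real) \<Rightarrow> ('e \<Rightarrow> 'v) \<Rightarrow> ('e \<Rightarrow> 'v) \<Rightarrow> ('e \<Rightarrow> 'e) \<Rightarrow> ('v,'e) op" where
  "Jop mu s t opp = alin_ext (J_b mu s t opp)"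

definition a_coef :: "('v \<Rightarrow> real) \<Rightarrow> ('e \<Rightarrow> 'v) \<Rightarrow> ('e \<Rightarrow> 'v) \<Rightarrow> 'e \<Rightarrow> real" where
  "a_coef mu s t e = (mu (s e) / mu (t e)) powr (1/4)"

definition X_und :: "('v \<Rightarrow> real) \<Rightarrow> ('e \<Rightarrow> 'v) \<Rightarrow> ('e \<Rightarrow> 'v) \<Rightarrow> ('e \<Rightarrow> 'e) \<Rightarrow> 'e \<Rightarrow> ('v,'e) op" where
  "X_und mu s t opp e x =
     (if s e = t e then (\<lambda>c. ell s t e x c + ellstar t e x c)
      else (let a = complex_of_real (a_coef mu s t e) in
        (\<lambda>c. a * ell s t e x c + inverse a * ellstar t (opp e) x c
             + inverse a * ell s t (opp e) x c + a * ellstar t e x c)))"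

definition X_dir :: "('v \<Rightarrow> real) \<Rightarrow> ('e \<Rightarrow> 'v) \<Rightarrow> ('e \<Rightarrow> 'v) \<Rightarrow> ('e \<Rightarrow> 'e) \<Rightarrow> 'e \<Rightarrow> ('v,'e) op" where
  "X_dir mu s t opp e = proj s (s e) \<circ> X_und mu s t opp e \<circ> proj s (t e)"

definition commutator :: "('v,'e) op \<Rightarrow> ('v,'e) op \<Rightarrow> ('v,'e) op" where
  "commutator A B x = (\<lambda>c. A (B x) c - B (A x) c)"

definition rank_one :: "('v \<Rightarrow> real) \<Rightarrow> ('e \<Rightarrow> 'v) \<Rightarrow> ('v,'e) vec \<Rightarrow> ('v,'e) vec \<Rightarrow> ('v,'e) op" where
  "rank_one mu t xi eta z = (\<lambda>c. xi c * hinner mu t eta z)"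

end

theory Submission
  imports Defs
begin

text \<open>
  Conjugation by J turns left creation and annihilation operators into right ones:
  J \<ell>(e) J appends the edge opp e at the end of a path and J \<ell>(opp e)* J deletes a final e,
  both with the factor (\<mu>(t e) / \<mu>(s e))^(1/2). On H, X_e reduces to a \<ell>(e) + a^-1 \<ell>(opp e)*,
  so J X_e' J is a combination of a right creation and a right annihilation operator.
  Left and right creation commute, and left creation \<ell>(e) commutes with the right annihilation
  of e' except on the vertex t e when e' = e: \<ell>(e) maps it to the path e, which right
  annihilation sends to the vertex s e, whereas right annihilation kills vertices.
  Finally a^-1 (\<mu>(t e) / \<mu>(s e))^(1/2) = \<mu>(t e) (\<mu>(s e)^3 \<mu>(t e))^(-1/4), where \<mu>(t e) is the
  squared norm of the vertex t e in the rank-one operator.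
\<close>

definition supp :: "('v,'e) vec \<Rightarrow> ('v,'e) hb set" where
  "supp x = {b. x b \<noteq> 0}"

lemma supp_bv [simp]: "supp (bv b) = {b}"
  by (auto simp: supp_def bv_def)

lemma supp_zero [simp]: "supp (\<lambda>_. 0) = {}"
  by (simp add: supp_def)

lemma finite_supp_image:
  assumes "finite (supp x)" "\<And>c. y c \<noteq> 0 \<Longrightarrow> \<exists>b. x b \<noteq> 0 \<and> c = g b"
  shows "finite (supp y)"
proof (rule finite_subset)
  show "supp y \<subseteq> g ` supp x" using assms(2) by (auto simp: supp_def)
qed (use assms(1) in blast)

lemma finite_supp_add:
  "finite (supp u) \<Longrightarrow> finite (supp v) \<Longrightarrow> finite (supp (\<lambda>c. u c + v c))"
  by (rule finite_subset[of _ "supp u \<union> supp v"]) (auto simp: supp_def)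

lemma finite_supp_scale: "finite (supp u) \<Longrightarrow> finite (supp (\<lambda>c. a * u c))"
  by (rule finite_subset[of _ "supp u"]) (auto simp: supp_def)

lemma lin_ext_single_term:
  assumes "finite (supp x)" "\<And>b. f b c \<noteq> 0 \<Longrightarrow> b = b\<^sub>0"
  shows "lin_ext f x c = x b\<^sub>0 * f b\<^sub>0 c"
proof -
  have "lin_ext f x c = (\<Sum>b\<in>supp x. if b = b\<^sub>0 then x b\<^sub>0 * f b\<^sub>0 c else 0)"
    unfolding lin_ext_def supp_def by (rule sum.cong) (auto dest: assms(2))
  then show ?thesis using assms(1) by (auto simp: supp_def)
qed

lemma alin_ext_single_term:
  assumes "finite (supp x)" "\<And>b. f b c \<noteq> 0 \<Longrightarrow> b = b\<^sub>0"
  shows "alin_ext f x c = cnj (x b\<^sub>0) * f b\<^sub>0 c"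
proof -
  have "alin_ext f x c = (\<Sum>b\<in>supp x. if b = b\<^sub>0 then cnj (x b\<^sub>0) * f b\<^sub>0 c else 0)"
    unfolding alin_ext_def supp_def by (rule sum.cong) (auto dest: assms(2))
  then show ?thesis using assms(1) by (auto simp: supp_def)
qed

lemma finite_supp_lin_ext:
  assumes "finite (supp x)" "\<And>b. finite (supp (f b))"
  shows "finite (supp (lin_ext f x))"
proof (rule finite_subset)
  show "supp (lin_ext f x) \<subseteq> (\<Union>b\<in>supp x. supp (f b))"
  proof
    fix c assume "c \<in> supp (lin_ext f x)"
    then obtain b where "b \<in> supp x" "x b * f b c \<noteq> 0"
      unfolding supp_def lin_ext_def by (auto elim: sum.not_neutral_contains_not_neutral)
    then show "c \<in> (\<Union>b\<in>supp x. supp (f b))" by (auto simp: supp_def)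
  qed
qed (use assms in blast)

lemma finite_supp_alin_ext:
  assumes "finite (supp x)" "\<And>b. finite (supp (f b))"
  shows "finite (supp (alin_ext f x))"
proof (rule finite_subset)
  show "supp (alin_ext f x) \<subseteq> (\<Union>b\<in>supp x. supp (f b))"
  proof
    fix c assume "c \<in> supp (alin_ext f x)"
    then obtain b where "b \<in> supp x" "cnj (x b) * f b c \<noteq> 0"
      unfolding supp_def alin_ext_def by (auto elim: sum.not_neutral_contains_not_neutral)
    then show "c \<in> (\<Union>b\<in>supp x. supp (f b))" by (auto simp: supp_def)
  qed
qed (use assms in blast)

lemma finite_supp_ell:
  assumes "finite (supp x)" shows "finite (supp (ell s t e x))"
  unfolding ell_def
proof (rule finite_supp_lin_ext[OF assms])
  show "finite (supp (ell_b s t e b))" for b by (cases b) auto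
qed

lemma finite_supp_ellstar:
  assumes "finite (supp x)" shows "finite (supp (ellstar t e x))"
  unfolding ellstar_def
proof (rule finite_supp_lin_ext[OF assms])
  show "finite (supp (ellstar_b t e b))" for b by (cases b) auto
qed

lemma finite_supp_proj:
  assumes "finite (supp x)" shows "finite (supp (proj s a x))"
  unfolding proj_def
proof (rule finite_supp_lin_ext[OF assms])
  show "finite (supp (proj_b s a b))" for b by (cases b) auto
qed

lemma finite_supp_Jop:
  assumes "finite (supp x)" shows "finite (supp (Jop mu s t opp x))"
  unfolding Jop_def
proof (rule finite_supp_alin_ext[OF assms])
  show "finite (supp (J_b mu s t opp b))" for b
    by (cases b) (auto intro: finite_subset[of _ "{P (rev (map opp es))}" for es] simp: supp_def bv_def)
qed

lemma finite_supp_X_und: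
  "finite (supp x) \<Longrightarrow> finite (supp (X_und mu s t opp e x))"
  unfolding X_und_def Let_def
  by (auto intro!: finite_supp_add finite_supp_scale finite_supp_ell finite_supp_ellstar)

lemma ell_V [simp]:
  assumes "finite (supp x)" shows "ell s t e x (V g) = 0"
  unfolding ell_def
proof (subst lin_ext_single_term[OF assms, where b\<^sub>0 = "V g"])
  show "b = V g" if "ell_b s t e b (V g) \<noteq> 0" for b
    using that by (cases b) (auto simp: bv_def split: if_splits)
qed (simp add: bv_def)

lemma ell_Nil [simp]:
  assumes "finite (supp x)" shows "ell s t e x (P []) = 0"
  unfolding ell_def
proof (subst lin_ext_single_term[OF assms, where b\<^sub>0 = "P []"])
  show "b = P []" if "ell_b s t e b (P []) \<noteq> 0" for b
    using that by (cases b) (auto simp: bv_def split: if_splits)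
qed (simp add: bv_def)

lemma ell_Cons [simp]:
  assumes "finite (supp x)"
  shows "ell s t e x (P (f # es)) =
    (if f = e then (if es = [] then x (V (t e)) else if t e = s (hd es) then x (P es) else 0) else 0)"
  unfolding ell_def
proof (subst lin_ext_single_term[OF assms, where b\<^sub>0 = "if es = [] then V (t e) else P es"])
  show "b = (if es = [] then V (t e) else P es)" if "ell_b s t e b (P (f # es)) \<noteq> 0" for b
    using that by (cases b) (auto simp: bv_def split: if_splits)
qed (simp add: bv_def)

lemma ellstar_V [simp]:
  assumes "finite (supp x)" shows "ellstar t e x (V g) = (if g = t e then x (P [e]) else 0)"
  unfolding ellstar_def
proof (subst lin_ext_single_term[OF assms, where b\<^sub>0 = "P [e]"])
  show "b = P [e]" if "ellstar_b t e b (V g) \<noteq> 0" for b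
    using that by (cases b) (auto simp: bv_def split: if_splits intro: list.expand)
qed (simp add: bv_def)

lemma ellstar_P [simp]:
  assumes "finite (supp x)" shows "ellstar t e x (P ys) = (if ys = [] then 0 else x (P (e # ys)))"
  unfolding ellstar_def
proof (subst lin_ext_single_term[OF assms, where b\<^sub>0 = "P (e # ys)"])
  show "b = P (e # ys)" if "ellstar_b t e b (P ys) \<noteq> 0" for b
    using that by (cases b) (auto simp: bv_def split: if_splits)
qed (simp add: bv_def)

lemma proj_V [simp]:
  assumes "finite (supp x)" shows "proj s a x (V g) = (if g = a then x (V g) else 0)"
  unfolding proj_def
proof (subst lin_ext_single_term[OF assms, where b\<^sub>0 = "V g"])
  show "b = V g" if "proj_b s a b (V g) \<noteq> 0" for b
    using that by (cases b) (auto simp: bv_def split: if_splits)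
qed (simp add: bv_def)

lemma proj_P [simp]:
  assumes "finite (supp x)" shows "proj s a x (P es) = (if es \<noteq> [] \<and> s (hd es) = a then x (P es) else 0)"
  unfolding proj_def
proof (subst lin_ext_single_term[OF assms, where b\<^sub>0 = "P es"])
  show "b = P es" if "proj_b s a b (P es) \<noteq> 0" for b
    using that by (cases b) (auto simp: bv_def split: if_splits)
qed (simp add: bv_def)

definition right_creation :: "('e \<Rightarrow> 'v) \<Rightarrow> ('e \<Rightarrow> 'v) \<Rightarrow> 'e \<Rightarrow> ('v,'e) op" where
  "right_creation s t f y c = (case c of
      V g \<Rightarrow> 0
    | P ys \<Rightarrow> if ys \<noteq> [] \<and> last ys = f then
        (if butlast ys = [] then y (V (s f))
         else if t (last (butlast ys)) = s f then y (P (butlast ys)) else 0) else 0)"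

definition right_annihilation :: "('e \<Rightarrow> 'v) \<Rightarrow> 'e \<Rightarrow> ('v,'e) op" where
  "right_annihilation s f y c = (case c of
      V g \<Rightarrow> if g = s f then y (P [f]) else 0
    | P ys \<Rightarrow> if ys = [] then 0 else y (P (ys @ [f])))"

lemma right_creation_V [simp]: "right_creation s t f y (V g) = 0"
  by (simp add: right_creation_def)

lemma right_creation_Nil [simp]: "right_creation s t f y (P []) = 0"
  by (simp add: right_creation_def)

lemma right_creation_snoc [simp]:
  "right_creation s t f y (P (bl @ [g])) =
    (if g = f then (if bl = [] then y (V (s f)) else if t (last bl) = s f then y (P bl) else 0) else 0)"
  by (simp add: right_creation_def)

lemma finite_supp_right_creation:
  "finite (supp y) \<Longrightarrow> finite (supp (right_creation s t f y))"
proof (erule finite_supp_image[where g = "\<lambda>b. case b of V _ \<Rightarrow> P [f] | P bl \<Rightarrow> P (bl @ [f])"])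
  fix c assume nz: "right_creation s t f y c \<noteq> 0"
  obtain ys where ys: "c = P ys" using nz by (cases c) simp_all
  obtain bl where bl: "ys = bl @ [f]"
    using nz unfolding ys by (cases ys rule: rev_cases) (auto split: if_splits)
  show "\<exists>b. y b \<noteq> 0 \<and> c = (case b of V _ \<Rightarrow> P [f] | P bl \<Rightarrow> P (bl @ [f]))"
    using nz by (intro exI[of _ "if bl = [] then V (s f) else P bl"]) (auto simp: ys bl split: if_splits)
qed

lemma finite_supp_right_annihilation:
  "finite (supp y) \<Longrightarrow> finite (supp (right_annihilation s f y))"
proof (erule finite_supp_image[where
      g = "\<lambda>b. case b of V v \<Rightarrow> V v | P zs \<Rightarrow> if butlast zs = [] then V (s f) else P (butlast zs)"])
  fix c assume nz: "right_annihilation s f y c \<noteq> 0"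
  show "\<exists>b. y b \<noteq> 0 \<and>
      c = (case b of V v \<Rightarrow> V v | P zs \<Rightarrow> if butlast zs = [] then V (s f) else P (butlast zs))"
  proof (cases c)
    case (V g)
    then show ?thesis using nz by (intro exI[of _ "P [f]"]) (auto simp: right_annihilation_def split: if_splits)
  next
    case (P ys)
    then show ?thesis using nz by (intro exI[of _ "P (ys @ [f])"]) (auto simp: right_annihilation_def split: if_splits)
  qed
qed

lemma ell_right_creation_commute:
  assumes "finite (supp y)"
  shows "ell s t e (right_creation s t f y) = right_creation s t f (ell s t e y)"
proof
  fix c
  have fin: "finite (supp (right_creation s t f y))" by (rule finite_supp_right_creation[OF assms])
  show "ell s t e (right_creation s t f y) c = right_creation s t f (ell s t e y) c"
  proof (cases c)
    case (P ys)
    show ?thesis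
    proof (cases ys)
      case (Cons b zs)
      show ?thesis
      proof (cases zs rule: rev_cases)
        case (snoc ws g)
        then show ?thesis using P Cons assms fin by (cases ws) (simp_all add: right_creation_def)
      qed (simp add: P Cons assms fin right_creation_def)
    qed (simp add: P assms fin)
  qed (simp add: assms fin)
qed

lemma ell_right_annihilation_commutator:
  assumes "finite (supp y)"
  shows "ell s t e (right_annihilation s f y) c - right_annihilation s f (ell s t e y) c =
    (if f = e \<and> c = V (s e) then - y (V (t e)) else 0)"
proof -
  have fin: "finite (supp (right_annihilation s f y))" by (rule finite_supp_right_annihilation[OF assms])
  show ?thesis
  proof (cases c)
    case (P ys)
    then show ?thesis
    proof (cases ys)
      case (Cons g es)
      then show ?thesis using P assms fin by (cases es) (auto simp: right_annihilation_def)
    qed (simp add: assms fin right_annihilation_def)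
  qed (auto simp: assms fin right_annihilation_def)
qed

lemma ell_lin_comb:
  assumes "finite (supp u)" "finite (supp v)"
  shows "ell s t e (\<lambda>c. a * u c + b * v c) c = a * ell s t e u c + b * ell s t e v c"
proof -
  have fin: "finite (supp (\<lambda>c. a * u c + b * v c))"
    using assms by (intro finite_supp_add finite_supp_scale)
  show ?thesis
  proof (cases c)
    case (P ys)
    then show ?thesis using assms fin by (cases ys) auto
  qed (simp add: assms fin)
qed

lemma in_H_finite_supp: "in_H s t y \<Longrightarrow> finite (supp y)"
  by (simp add: in_H_def supp_def)

lemma in_H_Nil: "in_H s t y \<Longrightarrow> y (P []) = 0"
  by (auto simp: in_H_def is_dpath_def)

lemma is_dpath_iff_successively:
  "is_dpath s t es \<longleftrightarrow> es \<noteq> [] \<and> successively (\<lambda>a b. t a = s b) es"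
  by (simp add: is_dpath_def successively_conv_nth)

lemma in_H_Cons_Cons: "in_H s t y \<Longrightarrow> y (P (a # b # rest)) \<noteq> 0 \<Longrightarrow> t a = s b"
  unfolding in_H_def by (force simp: is_dpath_iff_successively)

lemma in_H_snoc: "in_H s t y \<Longrightarrow> y (P (ys @ [e])) \<noteq> 0 \<Longrightarrow> ys \<noteq> [] \<Longrightarrow> t (last ys) = s e"
  unfolding in_H_def by (force simp: is_dpath_iff_successively successively_append_iff)

lemma in_H_ell:
  assumes "in_H s t y" shows "in_H s t (ell s t e y)"
  unfolding in_H_def
proof (intro conjI allI impI)
  have fin: "finite (supp y)" by (rule in_H_finite_supp[OF assms])
  then show "finite {b. ell s t e y b \<noteq> 0}"
    using finite_supp_ell by (simp add: supp_def)
  fix b assume nz: "ell s t e y b \<noteq> 0"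
  show "hb_ok s t b"
  proof (cases b)
    case (P ys)
    with nz fin obtain es where "ys = e # es" "es = [] \<or> t e = s (hd es) \<and> y (P es) \<noteq> 0"
      by (cases ys) (auto split: if_splits)
    moreover have "y (P es) \<noteq> 0 \<Longrightarrow> is_dpath s t es" for es
      using assms by (force simp: in_H_def)
    ultimately show ?thesis
      using P by (cases es) (auto simp: is_dpath_iff_successively)
  qed simp
qed

lemma inverse_quarter_power_mult_sqrt:
  fixes a b :: real assumes a: "0 < a" and b: "0 < b"
  shows "inverse ((a / b) powr (1/4)) * sqrt (b / a) = b / (a ^ 3 * b) powr (1/4)"
proof -
  have "inverse ((a / b) powr (1/4)) * sqrt (b / a) = (b / a) powr (1/4) * (b / a) powr (1/2)"
    using a b by (simp add: powr_half_sqrt powr_divide real_sqrt_divide)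
  also have "\<dots> = b powr (3/4) / a powr (3/4)"
    using a b by (simp add: powr_divide flip: powr_add)
  also have "\<dots> = b powr (3/4) * b powr (1/4) / (a powr (3/4) * b powr (1/4))"
    using b by simp
  also have "b powr (3/4) * b powr (1/4) = b"
    using b by (simp flip: powr_add)
  also have "a powr (3/4) = (a ^ 3) powr (1/4)"
    using a by (simp add: powr_powr flip: powr_numeral)
  also have "(a ^ 3) powr (1/4) * b powr (1/4) = (a ^ 3 * b) powr (1/4)"
    using a b by (simp add: powr_mult)
  finally show ?thesis .
qed

lemma hinner_bv_V: "hinner mu t (bv (V v)) x = x (V v) * complex_of_real (mu v)"
proof -
  have "{b. bv (V v) b \<noteq> 0} = {V v}" by (auto simp: bv_def)
  then show ?thesis by (simp add: hinner_def bv_def)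
qed

locale weighted_digraph =
  fixes s t :: "'e \<Rightarrow> 'v" and opp :: "'e \<Rightarrow> 'e" and mu :: "'v \<Rightarrow> real"
  assumes opp_inv: "\<And>e. opp (opp e) = e"
    and opp_s: "\<And>e. s (opp e) = t e" and opp_t: "\<And>e. t (opp e) = s e"
    and opp_fix: "\<And>e. opp e = e \<longleftrightarrow> s e = t e"
    and mu_pos: "\<And>v. mu v > 0"
begin

abbreviation J :: "('v,'e) op" where
  "J \<equiv> Jop mu s t opp"

lemma rev_map_opp_involutive [simp]: "rev (map opp (rev (map opp xs))) = xs"
  by (simp add: rev_map comp_def opp_inv)

lemma is_dpath_rev_map_opp: "is_dpath s t (rev (map opp es)) \<longleftrightarrow> is_dpath s t es"
  unfolding is_dpath_iff_successively
  by (auto simp: successively_map opp_s opp_t elim: successively_mono)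

lemma Jop_V [simp]:
  assumes "finite (supp x)" shows "J x (V g) = cnj (x (V g))"
  unfolding Jop_def
proof (subst alin_ext_single_term[OF assms, where b\<^sub>0 = "V g"])
  show "b = V g" if "J_b mu s t opp b (V g) \<noteq> 0" for b
    using that by (cases b) (auto simp: bv_def split: if_splits)
qed (simp add: bv_def)

text \<open>The weight of J at the empty word P [] involves hd [] and last []; since P [] carries no
  vector of H, it is excluded here and handled by Jop_Nil.\<close>

lemma Jop_P:
  assumes "finite (supp x)" "ys \<noteq> []"
  shows "J x (P ys) = sqrt (mu (s (hd ys)) / mu (t (last ys))) * cnj (x (P (rev (map opp ys))))"
  unfolding Jop_def
proof (subst alin_ext_single_term[OF assms(1), where b\<^sub>0 = "P (rev (map opp ys))"])
  show "b = P (rev (map opp ys))" if "J_b mu s t opp b (P ys) \<noteq> 0" for b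
    using that by (cases b) (auto simp: bv_def split: if_splits)
qed (use assms(2) in \<open>simp add: bv_def last_rev hd_rev hd_map last_map opp_s opp_t opp_inv\<close>)

lemma Jop_Nil:
  assumes "finite (supp x)" "x (P []) = 0" shows "J x (P []) = 0"
  unfolding Jop_def
proof (subst alin_ext_single_term[OF assms(1), where b\<^sub>0 = "P []"])
  show "b = P []" if "J_b mu s t opp b (P []) \<noteq> 0" for b
    using that by (cases b) (auto simp: bv_def split: if_splits)
qed (simp add: assms(2))

lemma in_H_Jop:
  assumes "in_H s t y" shows "in_H s t (J y)"
  unfolding in_H_def
proof (intro conjI allI impI)
  have fin: "finite (supp y)" by (rule in_H_finite_supp[OF assms])
  then show "finite {b. J y b \<noteq> 0}"
    using finite_supp_Jop by (simp add: supp_def)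
  fix b assume nz: "J y b \<noteq> 0"
  show "hb_ok s t b"
  proof (cases b)
    case (P ys)
    have "ys \<noteq> []" using nz P Jop_Nil[OF fin in_H_Nil[OF assms]] by auto
    then have "y (P (rev (map opp ys))) \<noteq> 0" using nz P by (simp add: Jop_P[OF fin])
    then have "is_dpath s t (rev (map opp ys))" using assms by (force simp: in_H_def)
    then show ?thesis using P by (simp add: is_dpath_rev_map_opp)
  qed simp
qed

definition conj_factor :: "'e \<Rightarrow> complex" where
  "conj_factor e = complex_of_real (sqrt (mu (t e) / mu (s e)))"

lemma sqrt_ratio_chain: "sqrt (mu v / mu u) * sqrt (mu w / mu v) = sqrt (mu w / mu u)"
  using mu_pos[of v] by (simp add: real_sqrt_mult[symmetric])

lemma Jop_ell_Jop:
  assumes fin: "finite (supp y)"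
  shows "J (ell s t e (J y)) c = conj_factor e * right_creation s t (opp e) y c"
proof -
  have finJ: "finite (supp (J y))" by (rule finite_supp_Jop[OF fin])
  have finE: "finite (supp (ell s t e (J y)))" by (rule finite_supp_ell[OF finJ])
  have opp_eq: "opp g = e \<longleftrightarrow> g = opp e" for g using opp_inv by metis
  show ?thesis
  proof (cases c)
    case (P ys)
    show ?thesis
    proof (cases ys rule: rev_cases)
      case Nil
      then show ?thesis using P by (simp add: Jop_Nil finE finJ)
    next
      case (snoc bl g)
      show ?thesis
      proof (cases "g = opp e \<and> bl \<noteq> []")
        case True
        then have "J (ell s t e (J y)) c =
            complex_of_real (sqrt (mu (s (hd bl)) / mu (s e)) * sqrt (mu (t (last bl)) / mu (s (hd bl))))
            * (if t e = t (last bl) then y (P bl) else 0)"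
          using P snoc
          by (simp add: Jop_P finE finJ fin opp_s opp_t opp_inv last_rev hd_rev hd_map last_map)
        also have "\<dots> = conj_factor e * right_creation s t (opp e) y c"
          unfolding sqrt_ratio_chain using True P snoc by (simp add: conj_factor_def opp_s)
        finally show ?thesis .
      qed (use P snoc in \<open>auto simp: Jop_P finE finJ fin opp_eq conj_factor_def opp_s opp_t\<close>)
    qed
  qed (simp add: finE finJ)
qed

lemma Jop_ellstar_Jop:
  assumes y: "in_H s t y"
  shows "J (ellstar t (opp e) (J y)) c = conj_factor e * right_annihilation s e y c"
proof -
  have fin: "finite (supp y)" by (rule in_H_finite_supp[OF y])
  have finJ: "finite (supp (J y))" by (rule finite_supp_Jop[OF fin])
  have finE: "finite (supp (ellstar t (opp e) (J y)))" by (rule finite_supp_ellstar[OF finJ])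
  show ?thesis
  proof (cases c)
    case (V g)
    then show ?thesis
      by (simp add: finE finJ fin Jop_P opp_s opp_t opp_inv conj_factor_def right_annihilation_def)
  next
    case (P ys)
    show ?thesis
    proof (cases "ys = []")
      case True
      then show ?thesis using P by (simp add: Jop_Nil finE finJ right_annihilation_def)
    next
      case False
      have "rev (map opp (opp e # rev (map opp ys))) = ys @ [e]"
        by (simp add: opp_inv)
      then have "J (ellstar t (opp e) (J y)) c =
          complex_of_real (sqrt (mu (s (hd ys)) / mu (t (last ys))) * sqrt (mu (t e) / mu (s (hd ys))))
          * y (P (ys @ [e]))"
        using P False
        by (simp add: Jop_P finE finJ fin opp_s opp_t last_rev hd_rev hd_map last_map)
      moreover have "y (P (ys @ [e])) \<noteq> 0 \<Longrightarrow> t (last ys) = s e"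
        using in_H_snoc[OF y _ False] by blast
      ultimately show ?thesis using P False
        unfolding sqrt_ratio_chain
        by (auto simp: conj_factor_def right_annihilation_def)
    qed
  qed
qed

lemma Jop_lin_comb:
  assumes "finite (supp u)" "finite (supp v)" "u (P []) = 0" "v (P []) = 0"
  shows "J (\<lambda>c. a * u c + b * v c) c = cnj a * J u c + cnj b * J v c"
proof -
  have fin: "finite (supp (\<lambda>c. a * u c + b * v c))"
    using assms by (intro finite_supp_add finite_supp_scale)
  show ?thesis
  proof (cases c)
    case (P ys)
    then show ?thesis
      using assms fin by (cases "ys = []") (simp_all add: Jop_Nil Jop_P algebra_simps)
  qed (simp add: assms fin)
qed

lemma a_coef_loop: "s e = t e \<Longrightarrow> a_coef mu s t e = 1"
  using mu_pos[of "s e"] by (simp add: a_coef_def)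

text \<open>The vertex projections around X_e kill \<ell>(opp e) and \<ell>(e)* unless e is a loop, and then
  a = 1 and opp e = e.\<close>

lemma X_dir_apply:
  assumes y: "in_H s t y"
  shows "X_dir mu s t opp e y c =
    complex_of_real (a_coef mu s t e) * ell s t e y c
    + inverse (complex_of_real (a_coef mu s t e)) * ellstar t (opp e) y c"
proof -
  have f: "finite (supp y)" by (rule in_H_finite_supp[OF y])
  have f2: "finite (supp (proj s (t e) y))" by (rule finite_supp_proj[OF f])
  have f3: "finite (supp (X_und mu s t opp e (proj s (t e) y)))" by (rule finite_supp_X_und[OF f2])
  note unfolds = X_dir_def X_und_def Let_def f f2 f3 finite_supp_add finite_supp_scale
    finite_supp_ell finite_supp_ellstar
  show ?thesis
  proof (cases c)
    case (V g)
    then show ?thesis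
      by (cases "s e = t e") (auto simp: unfolds a_coef_loop opp_s opp_t opp_fix[THEN iffD2])
  next
    case (P ys)
    show ?thesis
    proof (cases ys)
      case Nil
      then show ?thesis using P
        by (cases "s e = t e") (auto simp: unfolds a_coef_loop opp_s opp_t opp_fix[THEN iffD2] in_H_Nil[OF y])
    next
      case (Cons g es)
      have opp_e_adj: "s g \<noteq> s e \<Longrightarrow> y (P (opp e # g # es)) = 0"
        using in_H_Cons_Cons[OF y, of "opp e" g es] opp_t by auto
      have e_adj: "s g \<noteq> t e \<Longrightarrow> y (P (e # g # es)) = 0"
        using in_H_Cons_Cons[OF y, of e g es] by auto
      show ?thesis
      proof (cases "s e = t e")
        case True
        then have "opp e = e" using opp_fix by blast
        then show ?thesis using P Cons True opp_e_adj e_adj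
          by (auto simp: unfolds a_coef_loop)
      next
        case False
        then have "opp e \<noteq> e" using opp_fix by blast
        then show ?thesis using P Cons False opp_e_adj e_adj
          by (auto simp: unfolds opp_s opp_t)
      qed
    qed
  qed
qed

lemma Jop_X_dir_Jop:
  assumes y: "in_H s t y"
  shows "J (X_dir mu s t opp e (J y)) c = conj_factor e *
    (complex_of_real (a_coef mu s t e) * right_creation s t (opp e) y c
     + inverse (complex_of_real (a_coef mu s t e)) * right_annihilation s e y c)"
proof -
  have Jy: "in_H s t (J y)" by (rule in_H_Jop[OF y])
  have fin: "finite (supp (J y))" by (rule in_H_finite_supp[OF Jy])
  have "X_dir mu s t opp e (J y) = (\<lambda>c.
      complex_of_real (a_coef mu s t e) * ell s t e (J y) c
      + inverse (complex_of_real (a_coef mu s t e)) * ellstar t (opp e) (J y) c)"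
    using X_dir_apply[OF Jy] by blast
  then show ?thesis
    using in_H_finite_supp[OF y]
    by (simp add: Jop_lin_comb fin finite_supp_ell finite_supp_ellstar Jop_ell_Jop Jop_ellstar_Jop[OF y]
        algebra_simps flip: of_real_inverse)
qed

lemma commutator_ell_Jop_X_dir_Jop:
  assumes x: "in_H s t x"
  shows "commutator (ell s t e) (J \<circ> X_dir mu s t opp e' \<circ> J) x c =
    (if e' = e \<and> c = V (s e)
     then - inverse (complex_of_real (a_coef mu s t e)) * conj_factor e * x (V (t e)) else 0)"
proof -
  define k where "k = conj_factor e'"
  define a where "a = complex_of_real (a_coef mu s t e')"
  let ?R = "right_creation s t (opp e')" and ?L = "right_annihilation s e'"
  have fin: "finite (supp x)" by (rule in_H_finite_supp[OF x])
  have conj_X: "(J \<circ> X_dir mu s t opp e' \<circ> J) y = (\<lambda>c. (k * a) * ?R y c + (k * inverse a) * ?L y c)"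
    if "in_H s t y" for y
    using Jop_X_dir_Jop[OF that] by (auto simp: k_def a_def algebra_simps)
  have "commutator (ell s t e) (J \<circ> X_dir mu s t opp e' \<circ> J) x c
      = k * a * (ell s t e (?R x) c - ?R (ell s t e x) c)
        + k * inverse a * (ell s t e (?L x) c - ?L (ell s t e x) c)"
    unfolding commutator_def conj_X[OF x] conj_X[OF in_H_ell[OF x]]
      ell_lin_comb[OF finite_supp_right_creation[OF fin] finite_supp_right_annihilation[OF fin]]
    by (simp add: algebra_simps)
  also have "\<dots> = k * inverse a * (if e' = e \<and> c = V (s e) then - x (V (t e)) else 0)"
    by (simp add: ell_right_creation_commute ell_right_annihilation_commutator fin)
  finally show ?thesis by (auto simp: k_def a_def)
qed

end

theorem lemma3p4:
  fixes s t :: "'e::finite \<Rightarrow> 'v::finite" and opp :: "'e \<Rightarrow> 'e" and mu :: "'v \<Rightarrow> real"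
  assumes opp_inv: "\<And>e. opp (opp e) = e"
    and opp_s: "\<And>e. s (opp e) = t e" and opp_t: "\<And>e. t (opp e) = s e"
    and opp_fix: "\<And>e. opp e = e \<longleftrightarrow> s e = t e"
    and conn: "\<And>u v. (u, v) \<in> (range (\<lambda>e. (s e, t e)))\<^sup>*"
    and mu_pos: "\<And>v. mu v > 0"
  shows "(\<forall>e x. in_H s t x \<longrightarrow>
            commutator (ell s t e) (Jop mu s t opp \<circ> X_dir mu s t opp e \<circ> Jop mu s t opp) x
            = (\<lambda>c. - complex_of_real (1 / ((mu (s e) ^ 3 * mu (t e)) powr (1/4)))
                   * rank_one mu t (bv (V (s e))) (bv (V (t e))) x c)) \<and>
         (\<forall>e e' x. e' \<noteq> e \<longrightarrow> in_H s t x \<longrightarrow>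
            commutator (ell s t e) (Jop mu s t opp \<circ> X_dir mu s t opp e' \<circ> Jop mu s t opp) x = (\<lambda>_. 0))"
proof -
  interpret weighted_digraph s t opp mu
    using opp_inv opp_s opp_t opp_fix mu_pos by unfold_locales
  have coef: "inverse (complex_of_real (a_coef mu s t e)) * conj_factor e
      = complex_of_real (1 / ((mu (s e) ^ 3 * mu (t e)) powr (1/4))) * complex_of_real (mu (t e))" for e
    using inverse_quarter_power_mult_sqrt[OF mu_pos mu_pos, of "s e" "t e"]
    by (simp add: a_coef_def conj_factor_def flip: of_real_inverse of_real_mult)
  show ?thesis
    unfolding rank_one_def hinner_bv_V
    by (auto intro!: ext simp: commutator_ell_Jop_X_dir_Jop coef bv_def)
qed

end
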